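(* Let $S$ be a left amenable semigroup and let $X$ be a Banach space that is complemented in its bidual $X^{**}$ (i.e. there is a bounded linear projection from $X^{**}$ onto the canonical image of $X$). Then there exists an $X$-valued left invariant mean on $S$, i.e. a bounded linear map $M: B(S,X)\to X$ such that $M(x\chi_S)=x$ for all $x\in X$ and $M(f)=M(f_s)$ for all $f\in B(S,X)$ and $s\in S$.
   Context: $B(S,X)$ denotes the Banach space of all bounded functions $f:S\to X$ with the supremum norm; $x\chi_S$ denotes the function on $S$ identically equal to $x$; for $f$ defined on $S$ and $s\in S$, $f_s(t)=f(st)$ is the left translate. $S$ is left amenable if there is a left invariant mean on $\ell_\infty(S)$, i.e. a norm-one linear functional $m$ on $\ell_\infty(S)$ with $m(e)=1$ ($e$ the constant function $1$) and $m(f)=m(f_s)$ for all $f\in\ell_\infty(S)$, $s\in S$. *)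

theory Defs
  imports "HOL-Analysis.Analysis"
begin

text \<open>Elements of B(S,X): bounded functions S \<Rightarrow> X.  S is the (whole) type 'a.\<close>
definition bfun :: "('a \<Rightarrow> 'b::real_normed_vector) set" where
  "bfun = {f. bounded (range f)}"

definition supnorm :: "('a \<Rightarrow> 'b::real_normed_vector) \<Rightarrow> real" where
  "supnorm f = (SUP t. norm (f t))"

definition ltrans :: "('a::semigroup_mult \<Rightarrow> 'b) \<Rightarrow> 'a \<Rightarrow> ('a \<Rightarrow> 'b)" where
  "ltrans f s = (\<lambda>t. f (s * t))"

text \<open>M is a bounded linear map B(S,X) \<rightarrow> X (only its values on bfun matter).\<close>
definition bounded_linear_on_bfun :: "(('a \<Rightarrow> 'b::real_normed_vector) \<Rightarrow> 'c::real_normed_vector) \<Rightarrow> bool" where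
  "bounded_linear_on_bfun M \<longleftrightarrow>
     (\<forall>f\<in>bfun. \<forall>g\<in>bfun. M (\<lambda>t. f t + g t) = M f + M g) \<and>
     (\<forall>f\<in>bfun. \<forall>c. M (\<lambda>t. c *\<^sub>R f t) = c *\<^sub>R M f) \<and>
     (\<exists>K. \<forall>f\<in>bfun. norm (M f) \<le> K * supnorm f)"

text \<open>Left invariant mean on l_infinity(S): linear functional m with m(e) = 1,
  operator norm one (given m(e)=1, this is |m f| \<le> ||f||_\<infinity> for all f), and
  m(f) = m(f_s).\<close>
definition left_invariant_mean :: "(('a::semigroup_mult \<Rightarrow> real) \<Rightarrow> real) \<Rightarrow> bool" where
  "left_invariant_mean m \<longleftrightarrow>
     (\<forall>f\<in>bfun. \<forall>g\<in>bfun. m (\<lambda>t. f t + g t) = m f + m g) \<and>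
     (\<forall>f\<in>bfun. \<forall>c. m (\<lambda>t. c * f t) = c * m f) \<and>
     (\<forall>f\<in>bfun. \<bar>m f\<bar> \<le> supnorm f) \<and>
     m (\<lambda>t. 1) = 1 \<and>
     (\<forall>f\<in>bfun. \<forall>s. m (ltrans f s) = m f)"

definition left_amenable :: "'a::semigroup_mult itself \<Rightarrow> bool" where
  "left_amenable _ \<longleftrightarrow> (\<exists>m :: ('a \<Rightarrow> real) \<Rightarrow> real. left_invariant_mean m)"

definition canon :: "'b::real_normed_vector \<Rightarrow> (('b \<Rightarrow>\<^sub>L real) \<Rightarrow>\<^sub>L real)" where
  "canon x = Blinfun (\<lambda>\<phi>. blinfun_apply \<phi> x)"

definition complemented_in_bidual :: "'b::banach itself \<Rightarrow> bool" where
  "complemented_in_bidual _ \<longleftrightarrow>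
     (\<exists>Q :: ((('b \<Rightarrow>\<^sub>L real) \<Rightarrow>\<^sub>L real) \<Rightarrow>\<^sub>L (('b \<Rightarrow>\<^sub>L real) \<Rightarrow>\<^sub>L real)).
        (\<forall>u. blinfun_apply Q (blinfun_apply Q u) = blinfun_apply Q u) \<and> range (blinfun_apply Q) = range (canon :: 'b \<Rightarrow> _))"

lemma canon_apply: "blinfun_apply (canon x) \<phi> = blinfun_apply \<phi> x"
  unfolding canon_def by (simp add: bounded_linear_blinfun_apply bounded_linear_Blinfun_apply)

end

theory Submission
  imports Defs
begin

text \<open>For f \<in> B(S,X), the map \<phi> \<mapsto> m (\<phi> \<circ> f) averages with the scalar invariant mean m and
  is an element of X** of norm at most the sup norm of f; it is invariant under left translation
  of f and is the canonical image of x when f is constantly x. By Hahn-Banach the canonical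
  embedding X \<rightarrow> X** is isometric, so a bounded projection of X** onto its range yields a
  bounded linear retraction R of X** onto X. Applying R to the X**-valued mean gives the
  X-valued invariant mean.\<close>

locale sublinear =
  fixes p :: "'a::real_vector \<Rightarrow> real"
  assumes subadditive: "p (x + y) \<le> p x + p y"
    and positively_homogeneous: "0 \<le> c \<Longrightarrow> p (c *\<^sub>R x) = c * p x"
begin

lemma zero [simp]: "p 0 = 0"
  using positively_homogeneous[of 0 0] by simp

text \<open>Graphs of p-dominated linear functionals on linear subspaces, encoded as sets of pairs.\<close>
definition dominated_graph :: "('a \<times> real) set \<Rightarrow> bool" where
  "dominated_graph G \<longleftrightarrow>
     (\<forall>a r b s c d. (a, r) \<in> G \<longrightarrow> (b, s) \<in> G \<longrightarrow> (c *\<^sub>R a + d *\<^sub>R b, c * r + d * s) \<in> G) \<and>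
     (\<forall>a r. (a, r) \<in> G \<longrightarrow> r \<le> p a)"

lemma dominated_graph_lincomb:
  "dominated_graph G \<Longrightarrow> (a, r) \<in> G \<Longrightarrow> (b, s) \<in> G \<Longrightarrow> (c *\<^sub>R a + d *\<^sub>R b, c * r + d * s) \<in> G"
  unfolding dominated_graph_def by blast

lemma dominated_graph_le: "dominated_graph G \<Longrightarrow> (a, r) \<in> G \<Longrightarrow> r \<le> p a"
  unfolding dominated_graph_def by blast

lemma dominated_graph_add: "dominated_graph G \<Longrightarrow> (a, r) \<in> G \<Longrightarrow> (b, s) \<in> G \<Longrightarrow> (a + b, r + s) \<in> G"
  using dominated_graph_lincomb[of G a r b s 1 1] by simp

lemma dominated_graph_scaleR: "dominated_graph G \<Longrightarrow> (a, r) \<in> G \<Longrightarrow> (c *\<^sub>R a, c * r) \<in> G"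
  using dominated_graph_lincomb[of G a r a r c 0] by simp

lemma dominated_graph_unique:
  assumes G: "dominated_graph G" and "(a, r) \<in> G" "(a, s) \<in> G"
  shows "r = s"
proof -
  have "(0, r - s) \<in> G" "(0, s - r) \<in> G"
    using dominated_graph_lincomb[OF G, of a _ a _ 1 "-1"] assms(2,3) by auto
  then have "r - s \<le> 0" "s - r \<le> 0"
    using dominated_graph_le[OF G] by fastforce+
  then show ?thesis by simp
qed

lemma dominated_graph_gap:
  assumes G: "dominated_graph G" and "G \<noteq> {}"
  obtains \<alpha> where "\<And>b s. (b, s) \<in> G \<Longrightarrow> s - p (b - y) \<le> \<alpha>"
    and "\<And>a r. (a, r) \<in> G \<Longrightarrow> \<alpha> \<le> p (a + y) - r"
proof
  define S where "S = {s - p (b - y) | b s. (b, s) \<in> G}"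
  have below: "s - p (b - y) \<le> p (a + y) - r" if "(a, r) \<in> G" "(b, s) \<in> G" for a r b s
  proof -
    have "r + s \<le> p (a + b)"
      using dominated_graph_le[OF G dominated_graph_add[OF G that]] .
    also have "\<dots> \<le> p (a + y) + p (b - y)"
      using subadditive[of "a + y" "b - y"] by simp
    finally show ?thesis by simp
  qed
  have "S \<noteq> {}" "bdd_above S"
    using \<open>G \<noteq> {}\<close> below unfolding S_def bdd_above_def by fast+
  then show "s - p (b - y) \<le> Sup S" if "(b, s) \<in> G" for b s
    using that by (intro cSup_upper) (auto simp: S_def)
  show "Sup S \<le> p (a + y) - r" if "(a, r) \<in> G" for a r
    using \<open>S \<noteq> {}\<close> that below by (intro cSup_least) (auto simp: S_def)
qed

lemma dominated_graph_extension_le: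
  assumes G: "dominated_graph G" and "(a, r) \<in> G"
    and lower: "\<And>b s. (b, s) \<in> G \<Longrightarrow> s - p (b - y) \<le> \<alpha>"
    and upper: "\<And>a r. (a, r) \<in> G \<Longrightarrow> \<alpha> \<le> p (a + y) - r"
  shows "r + t * \<alpha> \<le> p (a + t *\<^sub>R y)"
proof (cases t "0::real" rule: linorder_cases)
  case less
  define u where "u = - t"
  have u: "u > 0" using less by (simp add: u_def)
  have "(1 / u) * r - p ((1 / u) *\<^sub>R a - y) \<le> \<alpha>"
    using lower[OF dominated_graph_scaleR[OF G \<open>(a, r) \<in> G\<close>]] .
  then have "r - u * p ((1 / u) *\<^sub>R a - y) \<le> u * \<alpha>"
    using u by (simp add: field_simps)
  also have "u * p ((1 / u) *\<^sub>R a - y) = p (u *\<^sub>R ((1 / u) *\<^sub>R a - y))"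
    using u by (simp add: positively_homogeneous)
  also have "u *\<^sub>R ((1 / u) *\<^sub>R a - y) = a + t *\<^sub>R y"
    using u by (simp add: scaleR_diff_right u_def)
  finally show ?thesis by (simp add: u_def)
next
  case equal
  then show ?thesis using dominated_graph_le[OF G \<open>(a, r) \<in> G\<close>] by simp
next
  case greater
  have "\<alpha> \<le> p ((1 / t) *\<^sub>R a + y) - (1 / t) * r"
    using upper[OF dominated_graph_scaleR[OF G \<open>(a, r) \<in> G\<close>]] .
  then have "t * \<alpha> \<le> t * p ((1 / t) *\<^sub>R a + y) - r"
    using greater by (simp add: field_simps)
  also have "t * p ((1 / t) *\<^sub>R a + y) = p (t *\<^sub>R ((1 / t) *\<^sub>R a + y))"
    using greater by (simp add: positively_homogeneous)
  also have "t *\<^sub>R ((1 / t) *\<^sub>R a + y) = a + t *\<^sub>R y"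
    using greater by (simp add: scaleR_add_right)
  finally show ?thesis by simp
qed

lemma dominated_graph_extend:
  assumes G: "dominated_graph G" and "G \<noteq> {}"
  shows "\<exists>\<alpha>. dominated_graph {(a + t *\<^sub>R y, r + t * \<alpha>) | a r t. (a, r) \<in> G}"
proof -
  obtain \<alpha> where lower: "\<And>b s. (b, s) \<in> G \<Longrightarrow> s - p (b - y) \<le> \<alpha>"
    and upper: "\<And>a r. (a, r) \<in> G \<Longrightarrow> \<alpha> \<le> p (a + y) - r"
    using dominated_graph_gap[OF assms] by blast
  let ?E = "{(a + t *\<^sub>R y, r + t * \<alpha>) | a r t. (a, r) \<in> G}"
  have "dominated_graph ?E"
    unfolding dominated_graph_def
  proof (intro conjI allI impI)
    fix a' r' b' s' c d
    assume "(a', r') \<in> ?E" "(b', s') \<in> ?E"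
    then obtain a r t b s u where ar: "(a, r) \<in> G" "a' = a + t *\<^sub>R y" "r' = r + t * \<alpha>"
      and bs: "(b, s) \<in> G" "b' = b + u *\<^sub>R y" "s' = s + u * \<alpha>"
      by blast
    have "(c *\<^sub>R a + d *\<^sub>R b, c * r + d * s) \<in> G"
      by (rule dominated_graph_lincomb[OF G ar(1) bs(1)])
    moreover have "c *\<^sub>R a' + d *\<^sub>R b' = (c *\<^sub>R a + d *\<^sub>R b) + (c * t + d * u) *\<^sub>R y"
      and "c * r' + d * s' = (c * r + d * s) + (c * t + d * u) * \<alpha>"
      using ar bs by (simp_all add: algebra_simps)
    ultimately show "(c *\<^sub>R a' + d *\<^sub>R b', c * r' + d * s') \<in> ?E" by blast
  next
    fix a' r' assume "(a', r') \<in> ?E"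
    then show "r' \<le> p a'"
      using dominated_graph_extension_le[OF G _ lower upper] by blast
  qed
  then show ?thesis by blast
qed

lemma dominated_graph_Union_chain:
  assumes "\<And>H. H \<in> C \<Longrightarrow> dominated_graph H"
    and chain: "\<And>H K. H \<in> C \<Longrightarrow> K \<in> C \<Longrightarrow> H \<subseteq> K \<or> K \<subseteq> H"
  shows "dominated_graph (\<Union>C)"
  unfolding dominated_graph_def
proof (intro conjI allI impI)
  fix a r b s c d assume "(a, r) \<in> \<Union>C" "(b, s) \<in> \<Union>C"
  then obtain H K where "H \<in> C" "K \<in> C" "(a, r) \<in> H" "(b, s) \<in> K" by blast
  with chain[of H K] obtain L where "L \<in> C" "(a, r) \<in> L" "(b, s) \<in> L" by blast
  then show "(c *\<^sub>R a + d *\<^sub>R b, c * r + d * s) \<in> \<Union>C"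
    using dominated_graph_lincomb assms(1) by blast
next
  fix a r assume "(a, r) \<in> \<Union>C"
  then show "r \<le> p a" using dominated_graph_le assms(1) by blast
qed

lemma maximal_dominated_graph_total:
  assumes M: "dominated_graph M" "M \<noteq> {}"
    and maximal: "\<And>H. dominated_graph H \<Longrightarrow> M \<subseteq> H \<Longrightarrow> H = M"
  shows "\<exists>r. (y, r) \<in> M"
proof -
  obtain \<alpha> where E: "dominated_graph {(a + t *\<^sub>R y, r + t * \<alpha>) | a r t. (a, r) \<in> M}"
    (is "dominated_graph ?E")
    using dominated_graph_extend[OF M] by blast
  have "M \<subseteq> ?E"
  proof (rule subrelI)
    fix a r assume "(a, r) \<in> M"
    then have "(a + 0 *\<^sub>R y, r + 0 * \<alpha>) \<in> ?E" by blast
    then show "(a, r) \<in> ?E" by simp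
  qed
  then have "?E = M" using maximal[OF E] by simp
  moreover obtain a r where "(a, r) \<in> M" using \<open>M \<noteq> {}\<close> by auto
  then have "(0, 0) \<in> M" using dominated_graph_scaleR[OF M(1), of a r 0] by simp
  then have "(0 + 1 *\<^sub>R y, 0 + 1 * \<alpha>) \<in> ?E" by blast
  then have "(y, \<alpha>) \<in> ?E" by simp
  ultimately show ?thesis by auto
qed

lemma total_dominated_graph_linear:
  assumes M: "dominated_graph M" and total: "\<And>y. \<exists>r. (y, r) \<in> M"
  shows "\<exists>g. linear g \<and> (\<forall>x. g x \<le> p x) \<and> (\<forall>(a, r) \<in> M. g a = r)"
proof -
  define g where "g a = (SOME r. (a, r) \<in> M)" for a
  have gM: "(a, g a) \<in> M" for a
    unfolding g_def using total by (rule someI_ex)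
  have "linear g"
  proof (rule linearI)
    show "g (a + b) = g a + g b" for a b
      using dominated_graph_unique[OF M gM dominated_graph_add[OF M gM gM]] .
    show "g (c *\<^sub>R a) = c *\<^sub>R g a" for c a
      using dominated_graph_unique[OF M gM dominated_graph_scaleR[OF M gM]] by simp
  qed
  moreover have "g x \<le> p x" for x
    using dominated_graph_le[OF M gM] .
  moreover have "g a = r" if "(a, r) \<in> M" for a r
    using dominated_graph_unique[OF M gM that] .
  ultimately show ?thesis by blast
qed

theorem hahn_banach:
  assumes G: "dominated_graph G" "G \<noteq> {}"
  shows "\<exists>g. linear g \<and> (\<forall>x. g x \<le> p x) \<and> (\<forall>(a, r) \<in> G. g a = r)"
proof -
  let ?A = "{H. dominated_graph H \<and> G \<subseteq> H}"
  have "\<exists>M\<in>?A. \<forall>H\<in>?A. M \<subseteq> H \<longrightarrow> H = M"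
  proof (rule subset_Zorn_nonempty)
    show "?A \<noteq> {}" using G by blast
    fix C assume "C \<noteq> {}" "subset.chain ?A C"
    then have "C \<subseteq> ?A" and chain: "\<forall>H\<in>C. \<forall>K\<in>C. H \<subseteq> K \<or> K \<subseteq> H"
      by (simp_all add: subset_chain_def)
    then have "dominated_graph (\<Union>C)"
      by (intro dominated_graph_Union_chain) auto
    moreover have "G \<subseteq> \<Union>C"
      using \<open>C \<noteq> {}\<close> \<open>C \<subseteq> ?A\<close> by blast
    ultimately show "\<Union>C \<in> ?A" by simp
  qed
  then obtain M where M: "dominated_graph M" "G \<subseteq> M"
    and maximal: "\<And>H. dominated_graph H \<Longrightarrow> M \<subseteq> H \<Longrightarrow> H = M"
    by (metis (no_types, lifting) mem_Collect_eq order_trans)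
  have "M \<noteq> {}" using G M by blast
  then have "\<And>y. \<exists>r. (y, r) \<in> M"
    using maximal_dominated_graph_total[OF M(1) _ maximal] by blast
  then obtain g where "linear g" "\<forall>x. g x \<le> p x" "\<forall>(a, r) \<in> M. g a = r"
    using total_dominated_graph_linear[OF M(1)] by blast
  then show ?thesis using M(2) by (intro exI[of _ g]) auto
qed

end

lemma sublinear_norm: "sublinear norm"
  by unfold_locales (simp_all add: norm_triangle_ineq)

lemma exists_norming_functional:
  fixes x :: "'b::real_normed_vector"
  shows "\<exists>\<phi> :: 'b \<Rightarrow>\<^sub>L real. norm \<phi> \<le> 1 \<and> blinfun_apply \<phi> x = norm x"
proof -
  interpret sublinear norm by (rule sublinear_norm)
  let ?G = "range (\<lambda>c. (c *\<^sub>R x, c * norm x))"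
  have "dominated_graph ?G"
    unfolding dominated_graph_def
  proof (intro conjI allI impI)
    fix a r b s c d assume "(a, r) \<in> ?G" "(b, s) \<in> ?G"
    then obtain e f where "a = e *\<^sub>R x" "r = e * norm x" "b = f *\<^sub>R x" "s = f * norm x" by blast
    then have combination:
      "(c *\<^sub>R a + d *\<^sub>R b, c * r + d * s) = ((c * e + d * f) *\<^sub>R x, (c * e + d * f) * norm x)"
      by (simp add: algebra_simps)
    show "(c *\<^sub>R a + d *\<^sub>R b, c * r + d * s) \<in> ?G"
      unfolding combination by (rule rangeI)
  next
    fix a r assume "(a, r) \<in> ?G"
    then obtain e where "a = e *\<^sub>R x" "r = e * norm x" by blast
    then show "r \<le> norm a" by (simp add: mult_right_mono)
  qed
  then obtain g where g: "linear g" "\<And>a. g a \<le> norm a"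
    and on_line: "\<And>c. g (c *\<^sub>R x) = c * norm x"
    using hahn_banach[of ?G] by auto
  have "g x = norm x"
    using on_line[of 1] by simp
  have abs_le: "\<bar>g a\<bar> \<le> norm a" for a
    using g(2)[of a] g(2)[of "- a"] linear_neg[OF g(1), of a] by simp
  have "bounded_linear g"
    using g(1) abs_le by (intro bounded_linear_intro[where K = 1]) (simp_all add: linear_add linear_scale)
  then have "blinfun_apply (Blinfun g) = g"
    by (rule bounded_linear_Blinfun_apply)
  moreover have "norm (Blinfun g) \<le> 1"
    using abs_le by (intro norm_blinfun_bound) (simp_all add: \<open>blinfun_apply (Blinfun g) = g\<close>)
  ultimately show ?thesis using \<open>g x = norm x\<close> by metis
qed

lemma norm_canon_le: "norm (canon x) \<le> norm x"
proof (rule norm_blinfun_bound)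
  show "norm (blinfun_apply (canon x) \<phi>) \<le> norm x * norm \<phi>" for \<phi>
    using norm_blinfun[of \<phi> x] by (simp add: canon_apply mult.commute)
qed simp

lemma norm_canon: "norm (canon x) = norm x"
proof (rule antisym[OF norm_canon_le])
  obtain \<phi> where \<phi>: "norm \<phi> \<le> 1" "blinfun_apply \<phi> x = norm x"
    using exists_norming_functional by blast
  have "norm x = norm (blinfun_apply (canon x) \<phi>)"
    using \<phi> by (simp add: canon_apply)
  also have "\<dots> \<le> norm (canon x) * norm \<phi>"
    by (rule norm_blinfun)
  also have "\<dots> \<le> norm (canon x)"
    using \<phi>(1) by (simp add: mult_left_le)
  finally show "norm x \<le> norm (canon x)" .
qed

lemma bounded_linear_canon: "bounded_linear canon"
proof (rule bounded_linear_intro[where K = 1])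
  show "canon (x + y) = canon x + canon y" for x y
    by (rule blinfun_eqI) (simp add: canon_apply blinfun.add_left blinfun.add_right)
  show "canon (c *\<^sub>R x) = c *\<^sub>R canon x" for c x
    by (rule blinfun_eqI) (simp add: canon_apply blinfun.scaleR_left blinfun.scaleR_right)
  show "norm (canon x) \<le> norm x * 1" for x
    by (simp add: norm_canon)
qed

lemma inj_canon: "inj (canon :: 'b::real_normed_vector \<Rightarrow> _)"
proof (rule injI)
  fix x y :: 'b assume "canon x = canon y"
  then have "norm (x - y) = 0"
    using linear_diff[OF bounded_linear.linear[OF bounded_linear_canon], of x y] by (simp flip: norm_canon[of "x - y"])
  then show "x = y" by simp
qed

lemma complemented_in_bidual_retraction:
  assumes "complemented_in_bidual TYPE('b::banach)"
  obtains R :: "(('b \<Rightarrow>\<^sub>L real) \<Rightarrow>\<^sub>L real) \<Rightarrow> 'b::banach"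
  where "bounded_linear R" "\<And>x. R (canon x) = x"
proof -
  obtain Q :: "(('b \<Rightarrow>\<^sub>L real) \<Rightarrow>\<^sub>L real) \<Rightarrow>\<^sub>L (('b \<Rightarrow>\<^sub>L real) \<Rightarrow>\<^sub>L real)"
    where idem: "\<And>u. blinfun_apply Q (blinfun_apply Q u) = blinfun_apply Q u"
      and range_Q: "range (blinfun_apply Q) = range (canon :: 'b \<Rightarrow> _)"
    using assms unfolding complemented_in_bidual_def by blast
  define R where "R u = inv canon (blinfun_apply Q u)" for u
  have canon_R: "canon (R u) = blinfun_apply Q u" for u
    unfolding R_def using range_Q by (metis f_inv_into_f rangeI)
  have canon_eqD: "canon x = canon y \<Longrightarrow> x = y" for x y :: 'b
    using inj_canon by (rule injD)
  interpret canon: bounded_linear canon by (rule bounded_linear_canon)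
  have "bounded_linear R"
  proof (rule bounded_linear_intro[where K = "norm Q"])
    show "R (u + v) = R u + R v" for u v
      by (rule canon_eqD) (simp add: canon_R canon.add blinfun.add_right)
    show "R (c *\<^sub>R u) = c *\<^sub>R R u" for c u
      by (rule canon_eqD) (simp add: canon_R canon.scaleR blinfun.scaleR_right)
    show "norm (R u) \<le> norm u * norm Q" for u
      using norm_blinfun[of Q u] by (simp add: canon_R mult.commute flip: norm_canon[of "R u"])
  qed
  moreover have "R (canon x) = x" for x
  proof (rule canon_eqD)
    obtain v where "canon x = blinfun_apply Q v" using range_Q by (metis rangeE rangeI)
    then show "canon (R (canon x)) = canon x" by (simp add: canon_R idem)
  qed
  ultimately show ?thesis by (rule that)
qed

lemma bfun_iff: "f \<in> bfun \<longleftrightarrow> (\<exists>B. \<forall>t. norm (f t) \<le> B)"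
  unfolding bfun_def bounded_iff by auto

lemma bfun_const: "(\<lambda>t. x) \<in> bfun"
  by (auto simp: bfun_iff)

lemma bfun_add: "f \<in> bfun \<Longrightarrow> g \<in> bfun \<Longrightarrow> (\<lambda>t. f t + g t) \<in> bfun"
  unfolding bfun_iff by (meson add_mono norm_triangle_le)

lemma bfun_scaleR:
  assumes "f \<in> bfun" shows "(\<lambda>t. c *\<^sub>R f t) \<in> bfun"
proof -
  obtain B where "\<And>t. norm (f t) \<le> B" using assms by (auto simp: bfun_iff)
  then have "norm (c *\<^sub>R f t) \<le> \<bar>c\<bar> * B" for t by (simp add: mult_left_mono)
  then show ?thesis by (auto simp: bfun_iff)
qed

lemma bfun_ltrans: "f \<in> bfun \<Longrightarrow> ltrans f s \<in> bfun"
  by (auto simp: bfun_iff ltrans_def)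

lemma bfun_blinfun_apply: "f \<in> bfun \<Longrightarrow> (\<lambda>t. blinfun_apply \<phi> (f t)) \<in> bfun"
  unfolding bfun_iff
  by (meson mult_left_mono norm_blinfun norm_ge_zero order_trans)

lemma supnorm_upper: "f \<in> bfun \<Longrightarrow> norm (f t) \<le> supnorm f"
  unfolding supnorm_def bfun_def
  by (rule cSUP_upper) (auto simp: bounded_iff bdd_above_def)

lemma supnorm_nonneg: "f \<in> bfun \<Longrightarrow> 0 \<le> supnorm f"
  using supnorm_upper[of f undefined] norm_ge_zero order_trans by blast

lemma supnorm_blinfun_apply_le:
  "f \<in> bfun \<Longrightarrow> supnorm (\<lambda>t. blinfun_apply \<phi> (f t)) \<le> norm \<phi> * supnorm f"
  unfolding supnorm_def[of "\<lambda>t. blinfun_apply \<phi> (f t)"]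
proof (rule cSUP_least)
  fix t assume "f \<in> bfun"
  have "norm (blinfun_apply \<phi> (f t)) \<le> norm \<phi> * norm (f t)" by (rule norm_blinfun)
  also have "\<dots> \<le> norm \<phi> * supnorm f" using supnorm_upper[OF \<open>f \<in> bfun\<close>] by (simp add: mult_left_mono)
  finally show "norm (blinfun_apply \<phi> (f t)) \<le> norm \<phi> * supnorm f" .
qed simp

lemma left_invariant_mean_add:
  "left_invariant_mean m \<Longrightarrow> f \<in> bfun \<Longrightarrow> g \<in> bfun \<Longrightarrow> m (\<lambda>t. f t + g t) = m f + m g"
  unfolding left_invariant_mean_def by blast

lemma left_invariant_mean_scale:
  "left_invariant_mean m \<Longrightarrow> f \<in> bfun \<Longrightarrow> m (\<lambda>t. c * f t) = c * m f"
  unfolding left_invariant_mean_def by blast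

lemma left_invariant_mean_abs_le: "left_invariant_mean m \<Longrightarrow> f \<in> bfun \<Longrightarrow> \<bar>m f\<bar> \<le> supnorm f"
  unfolding left_invariant_mean_def by blast

lemma left_invariant_mean_ltrans: "left_invariant_mean m \<Longrightarrow> f \<in> bfun \<Longrightarrow> m (ltrans f s) = m f"
  unfolding left_invariant_mean_def by blast

lemma left_invariant_mean_const: "left_invariant_mean m \<Longrightarrow> m (\<lambda>t. c) = c"
  using left_invariant_mean_scale[OF _ bfun_const, of m c 1]
  unfolding left_invariant_mean_def by simp

lemma abs_mean_blinfun_apply_le:
  assumes m: "left_invariant_mean m" and f: "f \<in> bfun"
  shows "\<bar>m (\<lambda>t. blinfun_apply \<phi> (f t))\<bar> \<le> norm \<phi> * supnorm f"
  using left_invariant_mean_abs_le[OF m bfun_blinfun_apply[OF f]] supnorm_blinfun_apply_le[OF f]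
  by (rule order_trans)

definition weak_mean :: "(('a \<Rightarrow> real) \<Rightarrow> real) \<Rightarrow> ('a \<Rightarrow> 'b::real_normed_vector) \<Rightarrow> ('b \<Rightarrow>\<^sub>L real) \<Rightarrow>\<^sub>L real"
  where "weak_mean m f = Blinfun (\<lambda>\<phi>. m (\<lambda>t. blinfun_apply \<phi> (f t)))"

lemma blinfun_apply_weak_mean:
  assumes m: "left_invariant_mean m" and f: "f \<in> bfun"
  shows "blinfun_apply (weak_mean m f) \<phi> = m (\<lambda>t. blinfun_apply \<phi> (f t))"
proof -
  have "bounded_linear (\<lambda>\<phi>. m (\<lambda>t. blinfun_apply \<phi> (f t)))"
  proof (rule bounded_linear_intro[where K = "supnorm f"])
    show "m (\<lambda>t. blinfun_apply (\<phi> + \<psi>) (f t))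
        = m (\<lambda>t. blinfun_apply \<phi> (f t)) + m (\<lambda>t. blinfun_apply \<psi> (f t))" for \<phi> \<psi>
      using left_invariant_mean_add[OF m bfun_blinfun_apply[OF f] bfun_blinfun_apply[OF f]]
      by (simp add: blinfun.add_left)
    show "m (\<lambda>t. blinfun_apply (c *\<^sub>R \<phi>) (f t)) = c *\<^sub>R m (\<lambda>t. blinfun_apply \<phi> (f t))" for c \<phi>
      using left_invariant_mean_scale[OF m bfun_blinfun_apply[OF f]]
      by (simp add: blinfun.scaleR_left)
    show "norm (m (\<lambda>t. blinfun_apply \<phi> (f t))) \<le> norm \<phi> * supnorm f" for \<phi>
      using abs_mean_blinfun_apply_le[OF m f] by simp
  qed
  then show ?thesis
    unfolding weak_mean_def by (simp add: bounded_linear_Blinfun_apply)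
qed

lemma norm_weak_mean_le:
  assumes m: "left_invariant_mean m" and f: "f \<in> bfun"
  shows "norm (weak_mean m f) \<le> supnorm f"
  using abs_mean_blinfun_apply_le[OF m f]
  by (intro norm_blinfun_bound supnorm_nonneg[OF f])
    (simp add: blinfun_apply_weak_mean[OF m f] mult.commute)

lemma weak_mean_add:
  assumes m: "left_invariant_mean m" and f: "f \<in> bfun" and g: "g \<in> bfun"
  shows "weak_mean m (\<lambda>t. f t + g t) = weak_mean m f + weak_mean m g"
proof (rule blinfun_eqI)
  fix \<phi> :: "'b \<Rightarrow>\<^sub>L real"
  have "m (\<lambda>t. blinfun_apply \<phi> (f t) + blinfun_apply \<phi> (g t))
      = m (\<lambda>t. blinfun_apply \<phi> (f t)) + m (\<lambda>t. blinfun_apply \<phi> (g t))"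
    by (rule left_invariant_mean_add[OF m bfun_blinfun_apply[OF f] bfun_blinfun_apply[OF g]])
  then show "blinfun_apply (weak_mean m (\<lambda>t. f t + g t)) \<phi> = blinfun_apply (weak_mean m f + weak_mean m g) \<phi>"
    by (simp add: blinfun_apply_weak_mean m f g bfun_add blinfun.add_right blinfun.add_left)
qed

lemma weak_mean_scaleR:
  assumes m: "left_invariant_mean m" and f: "f \<in> bfun"
  shows "weak_mean m (\<lambda>t. c *\<^sub>R f t) = c *\<^sub>R weak_mean m f"
proof (rule blinfun_eqI)
  fix \<phi> :: "'b \<Rightarrow>\<^sub>L real"
  have "m (\<lambda>t. c * blinfun_apply \<phi> (f t)) = c * m (\<lambda>t. blinfun_apply \<phi> (f t))"
    by (rule left_invariant_mean_scale[OF m bfun_blinfun_apply[OF f]])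
  then show "blinfun_apply (weak_mean m (\<lambda>t. c *\<^sub>R f t)) \<phi> = blinfun_apply (c *\<^sub>R weak_mean m f) \<phi>"
    by (simp add: blinfun_apply_weak_mean m f bfun_scaleR blinfun.scaleR_right blinfun.scaleR_left)
qed

lemma weak_mean_const:
  assumes m: "left_invariant_mean m"
  shows "weak_mean m (\<lambda>t. x) = canon x"
  by (rule blinfun_eqI)
    (simp add: blinfun_apply_weak_mean[OF m bfun_const] left_invariant_mean_const[OF m] canon_apply)

lemma weak_mean_ltrans:
  assumes m: "left_invariant_mean m" and f: "f \<in> bfun"
  shows "weak_mean m (ltrans f s) = weak_mean m f"
proof (rule blinfun_eqI)
  fix \<phi> :: "'b \<Rightarrow>\<^sub>L real"
  have "m (ltrans (\<lambda>t. blinfun_apply \<phi> (f t)) s) = m (\<lambda>t. blinfun_apply \<phi> (f t))"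
    by (rule left_invariant_mean_ltrans[OF m bfun_blinfun_apply[OF f]])
  then show "blinfun_apply (weak_mean m (ltrans f s)) \<phi> = blinfun_apply (weak_mean m f) \<phi>"
    by (simp add: blinfun_apply_weak_mean m f bfun_ltrans) (simp add: ltrans_def)
qed

lemma bounded_linear_on_bfun_comp_weak_mean:
  assumes m: "left_invariant_mean m" and R: "bounded_linear R"
  shows "bounded_linear_on_bfun (\<lambda>f. R (weak_mean m f))"
proof -
  interpret R: bounded_linear R by (rule R)
  obtain K where K: "0 \<le> K" "\<And>u. norm (R u) \<le> norm u * K"
    using R.nonneg_bounded by blast
  show ?thesis
    unfolding bounded_linear_on_bfun_def
  proof (intro conjI ballI allI exI[of _ K])
    show "R (weak_mean m (\<lambda>t. f t + g t)) = R (weak_mean m f) + R (weak_mean m g)"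
      if "f \<in> bfun" "g \<in> bfun" for f g
      by (simp add: weak_mean_add[OF m that] R.add)
    show "R (weak_mean m (\<lambda>t. c *\<^sub>R f t)) = c *\<^sub>R R (weak_mean m f)" if "f \<in> bfun" for f c
      by (simp add: weak_mean_scaleR[OF m that] R.scaleR)
    show "norm (R (weak_mean m f)) \<le> K * supnorm f" if "f \<in> bfun" for f
    proof -
      have "norm (R (weak_mean m f)) \<le> norm (weak_mean m f) * K" by (rule K(2))
      also have "\<dots> \<le> supnorm f * K" by (rule mult_right_mono[OF norm_weak_mean_le[OF m that] K(1)])
      finally show ?thesis by (simp add: mult.commute)
    qed
  qed
qed

theorem proposition1:
  assumes "left_amenable TYPE('a::semigroup_mult)"
    and "complemented_in_bidual TYPE('b::banach)"
  shows "\<exists>M :: ('a \<Rightarrow> 'b) \<Rightarrow> 'b.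
           bounded_linear_on_bfun M \<and>
           (\<forall>x. M (\<lambda>t. x) = x) \<and>
           (\<forall>f\<in>bfun. \<forall>s. M (ltrans f s) = M f)"
proof -
  obtain m :: "('a \<Rightarrow> real) \<Rightarrow> real" where m: "left_invariant_mean m"
    using assms(1) unfolding left_amenable_def by blast
  obtain R :: "(('b \<Rightarrow>\<^sub>L real) \<Rightarrow>\<^sub>L real) \<Rightarrow> 'b" where R: "bounded_linear R" "\<And>x. R (canon x) = x"
    using complemented_in_bidual_retraction[OF assms(2)] by blast
  let ?M = "\<lambda>f. R (weak_mean m f)"
  have "bounded_linear_on_bfun ?M"
    by (rule bounded_linear_on_bfun_comp_weak_mean[OF m R(1)])
  moreover have "?M (\<lambda>t. x) = x" for x
    by (simp add: weak_mean_const[OF m] R(2))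
  moreover have "?M (ltrans f s) = ?M f" if "f \<in> bfun" for f s
    by (simp add: weak_mean_ltrans[OF m that])
  ultimately show ?thesis by blast
qed

end
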